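(* If $\tilde w\in\widetilde W$ satisfies $\tilde w\alpha>0$ for all $\alpha\in\Delta(L)$, then $L\cap\tilde w^{-1}I^-\tilde w=B_L^-$.
   Context: $k$ a field, $G=\mathrm{GL}_n$, $s$ a variable; $I^-=\{g\in\mathrm{GL}_n(k[s^{-1}]):g|_{s^{-1}=0}\text{ lower triangular}\}$, $I\subset\mathrm{GL}_n(k[[s]])$ the preimage of upper triangular matrices. Affine roots $\alpha_{ij}+r$ have root subgroups $\{1+as^rE_{ij}\}$; an affine root is positive ($>0$) if its root subgroup lies in $I$. $\widetilde W$ = monomial matrices $w\,\mathrm{diag}(s^{\lambda_i})$, acting on affine roots by conjugation. Fix $1\le d\le n$. $L\subset\mathrm{GL}_n(k((s)))$ is the subgroup generated by the diagonal torus $T(k)$ and the root subgroups $\{1+as^{(i-j)/d}E_{ij}\}$, $i\equiv j\bmod d$, $i\ne j$ (isomorphic to $\{g\in\mathrm{GL}_n(k):g_{ij}=0\text{ unless }i\equiv j\bmod d\}$ via $s^{(i-j)/d}E_{ij}\mapsto E_{ij}$). $\Delta(L)=\{\alpha_{i,i+d}-1:1\le i\le n-d\}$ is its set of simple affine roots, and $B_L^-$ is the subgroup of $L$ generated by $T(k)$ and the root subgroups of $L$ with $i>j$. *)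

theory Defs
  imports "HOL-Computational_Algebra.Formal_Laurent_Series" "HOL-Combinatorics.Permutations"
    "Jordan_Normal_Form.Matrix"
begin

text \<open>Matrices are n x n matrices (indices 0..n-1) over k((s)) = 'k fls, s = fls_X.
  The variable s^r (r an integer) is fls_X_intpow r; constants of k embed via fls_const.\<close>

type_synonym 'k lmat = "'k fls mat"

definition invertible_in :: "nat \<Rightarrow> ('k::field fls \<Rightarrow> bool) \<Rightarrow> 'k lmat \<Rightarrow> bool" where
  "invertible_in n R g \<longleftrightarrow> g \<in> carrier_mat n n \<and>
     (\<exists>h \<in> carrier_mat n n. g * h = 1\<^sub>m n \<and> h * g = 1\<^sub>m n \<and>
        (\<forall>i<n. \<forall>j<n. R (g $$ (i,j)) \<and> R (h $$ (i,j))))"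

definition in_poly_sinv :: "'k::field fls \<Rightarrow> bool" where
  "in_poly_sinv f \<longleftrightarrow> (\<forall>m>0. fls_nth f m = 0)"

definition in_power_series :: "'k::field fls \<Rightarrow> bool" where
  "in_power_series f \<longleftrightarrow> (\<forall>m<0. fls_nth f m = 0)"

text \<open>I^-: elements of GL_n(k[s^{-1}]) whose value at s^{-1} = 0 (constant term) is lower triangular.\<close>
definition Iminus :: "nat \<Rightarrow> 'k::field lmat set" where
  "Iminus n = {g. invertible_in n in_poly_sinv g \<and>
                  (\<forall>i<n. \<forall>j<n. i < j \<longrightarrow> fls_nth (g $$ (i,j)) 0 = 0)}"

text \<open>Iwahori I: preimage in GL_n(k[[s]]) of the upper triangular matrices.\<close>
definition Iwahori :: "nat \<Rightarrow> 'k::field lmat set" where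
  "Iwahori n = {g. invertible_in n in_power_series g \<and>
                  (\<forall>i<n. \<forall>j<n. j < i \<longrightarrow> fls_nth (g $$ (i,j)) 0 = 0)}"

text \<open>Root subgroup of the affine root alpha_ij + r: {1 + a s^r E_ij : a in k}.\<close>
definition root_subgroup :: "nat \<Rightarrow> nat \<Rightarrow> nat \<Rightarrow> int \<Rightarrow> 'k::field lmat set" where
  "root_subgroup n i j r = {1\<^sub>m n + mat n n (\<lambda>(p,q). if p = i \<and> q = j
        then fls_const a * fls_X_intpow r else 0) | a. True}"

definition torus :: "nat \<Rightarrow> 'k::field lmat set" where
  "torus n = {mat n n (\<lambda>(p,q). if p = q then fls_const (t p) else 0) | t. \<forall>p<n. t p \<noteq> 0}"

inductive_set gen_subgroup :: "nat \<Rightarrow> 'k::field lmat set \<Rightarrow> 'k lmat set"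
  for n :: nat and S :: "'k lmat set" where
  one: "1\<^sub>m n \<in> gen_subgroup n S"
| gen: "g \<in> S \<Longrightarrow> g \<in> gen_subgroup n S"
| mult: "g \<in> gen_subgroup n S \<Longrightarrow> h \<in> gen_subgroup n S \<Longrightarrow> g * h \<in> gen_subgroup n S"
| inv: "g \<in> gen_subgroup n S \<Longrightarrow> h \<in> carrier_mat n n \<Longrightarrow> g * h = 1\<^sub>m n \<Longrightarrow> h * g = 1\<^sub>m n
        \<Longrightarrow> h \<in> gen_subgroup n S"

definition Lgrp :: "nat \<Rightarrow> nat \<Rightarrow> 'k::field lmat set" where
  "Lgrp n d = gen_subgroup n (torus n \<union>
     \<Union>{root_subgroup n i j ((int i - int j) div int d) | i j.
         i < n \<and> j < n \<and> i \<noteq> j \<and> i mod d = j mod d})"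

definition BLminus :: "nat \<Rightarrow> nat \<Rightarrow> 'k::field lmat set" where
  "BLminus n d = gen_subgroup n (torus n \<union>
     \<Union>{root_subgroup n i j ((int i - int j) div int d) | i j.
         i < n \<and> j < n \<and> i > j \<and> i mod d = j mod d})"

text \<open>Simple affine roots of L (0-based indices): alpha_{i,i+d} - 1, i + d < n,
  represented as triples (i, j, r) for alpha_ij + r.\<close>
definition DeltaL :: "nat \<Rightarrow> nat \<Rightarrow> (nat \<times> nat \<times> int) set" where
  "DeltaL n d = {(i, i + d, -1) | i. i + d < n}"

definition perm_matrix :: "nat \<Rightarrow> (nat \<Rightarrow> nat) \<Rightarrow> 'k::field lmat" where
  "perm_matrix n \<sigma> = mat n n (\<lambda>(p,q). if p = \<sigma> q then 1 else 0)"

definition diag_spow :: "nat \<Rightarrow> (nat \<Rightarrow> int) \<Rightarrow> 'k::field lmat" where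
  "diag_spow n lam = mat n n (\<lambda>(p,q). if p = q then fls_X_intpow (lam p) else 0)"

definition affW :: "nat \<Rightarrow> 'k::field lmat set" where
  "affW n = {perm_matrix n \<sigma> * diag_spow n lam | \<sigma> lam. \<sigma> permutes {..<n}}"

text \<open>The affine root w alpha is positive iff its root subgroup w U_alpha w^{-1} lies in I.\<close>
definition pos_after :: "nat \<Rightarrow> 'k::field lmat \<Rightarrow> 'k lmat \<Rightarrow> nat \<times> nat \<times> int \<Rightarrow> bool" where
  "pos_after n w winv \<alpha> \<longleftrightarrow>
     (case \<alpha> of (i, j, r) \<Rightarrow> (\<lambda>u. w * u * winv) ` root_subgroup n i j r \<subseteq> Iwahori n)"

end

theory Submission
  imports Defs "Jordan_Normal_Form.Determinant"
begin

text \<open>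
  Every element of L is of the form Lmat d A, the matrix with entries A_pq s^(p div d - q div d),
  for an invertible k-matrix A supported on the pairs p \<equiv> q (mod d); this is D A D^-1 with
  D = diag(s^(p div d)). For the elements of B_L^- the matrix A is moreover lower triangular, and
  conversely every such Lmat d A is a diagonal matrix times elementary lower transvections of L,
  so it lies in B_L^-. Conjugation by w = \<sigma> diag(s^\<lambda>) moves the entry A_ab s^e to position
  (\<sigma> a, \<sigma> b), multiplied by s^(\<lambda> a - \<lambda> b); thus the affine root \<alpha>_ab + e becomes
  \<alpha>_\<sigma>a\<sigma>b + (\<lambda> a - \<lambda> b + e). Positivity of the simple roots of L propagates along chains
  p, p + d, p + 2d, ... to all roots \<alpha>_pq + (p div d - q div d) with p < q, p \<equiv> q. Therefore
  w (Lmat d A) w^-1 lies in I^- exactly when the constant terms and positive powers of s that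
  these roots would contribute vanish, i.e. when A is lower triangular.
\<close>

lemma fls_const_sum: "fls_const (\<Sum>x\<in>A. f x) = (\<Sum>x\<in>A. fls_const (f x) :: 'k::field fls)"
  by (induction A rule: infinite_finite_induct) (simp_all flip: fls_plus_const)

lemma fls_const_X_intpow_mult:
  "fls_const a * fls_X_intpow e * (fls_const b * fls_X_intpow e') =
   (fls_const (a * b) * fls_X_intpow (e + e') :: 'k::field fls)"
proof -
  have "fls_const a * fls_X_intpow e * (fls_const b * fls_X_intpow e') =
        (fls_const a * fls_const b) * (fls_X_intpow e * fls_X_intpow e' :: 'k fls)"
    by (simp only: ac_simps)
  then show ?thesis by (simp only: fls_const_mult_const fls_X_intpow_times_fls_X_intpow)
qed

lemma fls_nth_const_X_intpow_mult:
  "fls_nth (fls_const c * fls_X_intpow e * f) t = (c :: 'k::field) * fls_nth f (t - e)"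
  by (simp add: mult.assoc fls_X_intpow_times_conv_shift(1))

lemma fls_nth_const_X_intpow:
  "fls_nth (fls_const c * fls_X_intpow e :: 'k::field fls) t = (if t = e then c else 0)"
  using fls_nth_const_X_intpow_mult[of c e 1 t] by simp

lemma in_poly_sinv_const_X_intpow:
  "in_poly_sinv (fls_const c * fls_X_intpow e :: 'k::field fls) \<longleftrightarrow> c = 0 \<or> e \<le> 0"
  by (auto simp: in_poly_sinv_def fls_nth_const_X_intpow)

lemma index_mult_mat_sum:
  assumes "A \<in> carrier_mat nr m" "B \<in> carrier_mat m nc" "i < nr" "j < nc"
  shows "(A * B) $$ (i, j) = (\<Sum>k<m. A $$ (i, k) * B $$ (k, j))"
  using assms by (simp add: scalar_prod_def lessThan_atLeast0)

subsection \<open>The matrices of L\<close>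

text \<open>
  For p \<equiv> q (mod d) the exponent Lexp d p q is the (p - q)/d of the root subgroups of L
  (see div_eq_Lexp); being additive in all indices it makes Lmat d multiplicative.
\<close>

definition Lexp :: "nat \<Rightarrow> nat \<Rightarrow> nat \<Rightarrow> int" where
  "Lexp d p q = int (p div d) - int (q div d)"

lemma Lexp_add: "Lexp d p m + Lexp d m q = Lexp d p q"
  by (simp add: Lexp_def)

lemma Lexp_self [simp]: "Lexp d p p = 0"
  by (simp add: Lexp_def)

lemma Lexp_diff: "Lexp d p q - Lexp d p m = Lexp d m q"
  by (simp add: Lexp_def)

lemma div_eq_Lexp:
  assumes "p mod d = q mod d"
  shows "(int p - int q) div int d = Lexp d p q"
proof (cases "d = 0")
  case False
  have "int p - int q = int d * Lexp d p q"
  proof -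
    have "int p = int d * int (p div d) + int (p mod d)" "int q = int d * int (q div d) + int (q mod d)"
      by (metis div_mult_mod_eq of_nat_add of_nat_mult mult.commute)+
    then show ?thesis using assms by (simp add: Lexp_def right_diff_distrib)
  qed
  then show ?thesis using False by simp
qed (simp add: Lexp_def)

definition Lmat :: "nat \<Rightarrow> 'k::field mat \<Rightarrow> 'k lmat" where
  "Lmat d A = mat (dim_row A) (dim_col A)
     (\<lambda>(p, q). fls_const (A $$ (p, q)) * fls_X_intpow (Lexp d p q))"

lemma Lmat_index [simp]:
  "p < dim_row A \<Longrightarrow> q < dim_col A \<Longrightarrow>
     Lmat d A $$ (p, q) = fls_const (A $$ (p, q)) * fls_X_intpow (Lexp d p q)"
  "dim_row (Lmat d A) = dim_row A" "dim_col (Lmat d A) = dim_col A"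
  by (simp_all add: Lmat_def)

lemma Lmat_carrier [simp]: "A \<in> carrier_mat nr nc \<Longrightarrow> Lmat d A \<in> carrier_mat nr nc"
  unfolding carrier_mat_def by (simp only: mem_Collect_eq Lmat_index(2,3))

lemma Lmat_mult:
  assumes A: "A \<in> carrier_mat nr m" and B: "B \<in> carrier_mat m nc"
  shows "Lmat d (A * B) = Lmat d A * Lmat d B"
proof (rule eq_matI)
  fix p q assume "p < dim_row (Lmat d A * Lmat d B)" "q < dim_col (Lmat d A * Lmat d B)"
  then have pq: "p < nr" "q < nc" using A B by auto
  have "(Lmat d A * Lmat d B) $$ (p, q) = (\<Sum>k<m. Lmat d A $$ (p, k) * Lmat d B $$ (k, q))"
    by (rule index_mult_mat_sum[OF Lmat_carrier[OF A] Lmat_carrier[OF B] pq])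
  also have "\<dots> = (\<Sum>k<m. fls_const (A $$ (p, k) * B $$ (k, q)) * fls_X_intpow (Lexp d p q))"
  proof (rule sum.cong)
    fix k assume "k \<in> {..<m}"
    then show "Lmat d A $$ (p, k) * Lmat d B $$ (k, q) =
        fls_const (A $$ (p, k) * B $$ (k, q)) * fls_X_intpow (Lexp d p q)"
      using A B pq by (simp only: Lmat_index carrier_matD lessThan_iff fls_const_X_intpow_mult Lexp_add)
  qed simp
  also have "\<dots> = fls_const ((A * B) $$ (p, q)) * fls_X_intpow (Lexp d p q)"
    by (simp only: index_mult_mat_sum[OF A B pq] fls_const_sum sum_distrib_right)
  also have "\<dots> = Lmat d (A * B) $$ (p, q)"
    using A B pq by simp
  finally show "Lmat d (A * B) $$ (p, q) = (Lmat d A * Lmat d B) $$ (p, q)" ..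
qed (use A B in auto)

lemma Lmat_one [simp]: "Lmat d (1\<^sub>m n) = 1\<^sub>m n"
  by (rule eq_matI) auto

lemma Lmat_right_inverse:
  assumes A: "A \<in> carrier_mat n n" and h: "h \<in> carrier_mat n n" and Ah: "Lmat d A * h = 1\<^sub>m n"
  obtains B where "B \<in> carrier_mat n n" "A * B = 1\<^sub>m n" "B * A = 1\<^sub>m n" "h = Lmat d B"
proof -
  define B where "B = mat n n (\<lambda>(p, q). fls_nth (h $$ (p, q)) (Lexp d p q))"
  have B_carrier: "B \<in> carrier_mat n n" by (simp add: B_def)
  have AB: "A * B = 1\<^sub>m n"
  proof (rule eq_matI)
    fix p q assume "p < dim_row (1\<^sub>m n :: 'a mat)" "q < dim_col (1\<^sub>m n :: 'a mat)"
    then have pq: "p < n" "q < n" by auto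
    have "(A * B) $$ (p, q) = (\<Sum>k<n. A $$ (p, k) * B $$ (k, q))"
      by (rule index_mult_mat_sum[OF A B_carrier pq])
    also have "\<dots> = (\<Sum>k<n. fls_nth (fls_const (A $$ (p, k)) * fls_X_intpow (Lexp d p k) * h $$ (k, q))
                                  (Lexp d p q))"
      using pq by (intro sum.cong) (simp_all add: B_def fls_nth_const_X_intpow_mult Lexp_diff)
    also have "\<dots> = fls_nth ((Lmat d A * h) $$ (p, q)) (Lexp d p q)"
      using A pq by (simp add: index_mult_mat_sum[OF Lmat_carrier[OF A] h pq] fls_nth_sum)
    finally have "(A * B) $$ (p, q) = fls_nth ((Lmat d A * h) $$ (p, q)) (Lexp d p q)" .
    then show "(A * B) $$ (p, q) = 1\<^sub>m n $$ (p, q)"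
      using Ah pq by simp
  qed (use A in \<open>auto simp: B_def\<close>)
  have BA: "B * A = 1\<^sub>m n" by (rule mat_mult_left_right_inverse[OF A B_carrier AB])
  have "h = Lmat d (B * A) * h" using h by (simp add: BA)
  also have "\<dots> = Lmat d B * (Lmat d A * h)"
    using A B_carrier h by (simp add: Lmat_mult[OF B_carrier A] assoc_mult_mat[of _ n n _ n _ n])
  also have "\<dots> = Lmat d B" using Ah B_carrier by simp
  finally show ?thesis using that B_carrier AB BA by blast
qed

definition mod_pattern :: "nat \<Rightarrow> 'a::zero mat \<Rightarrow> bool" where
  "mod_pattern d A \<longleftrightarrow>
     (\<forall>p<dim_row A. \<forall>q<dim_col A. A $$ (p, q) \<noteq> 0 \<longrightarrow> p mod d = q mod d)"

lemma mod_patternD: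
  "mod_pattern d A \<Longrightarrow> A \<in> carrier_mat n n \<Longrightarrow> p < n \<Longrightarrow> q < n \<Longrightarrow> A $$ (p, q) \<noteq> 0 \<Longrightarrow>
     p mod d = q mod d"
  unfolding mod_pattern_def by blast

text \<open>
  A matrix has the congruence pattern iff it commutes with the projections onto the residue
  classes mod d; in this form the pattern is evidently inherited by inverses.
\<close>

definition residue_proj :: "nat \<Rightarrow> nat \<Rightarrow> nat \<Rightarrow> 'a::semiring_1 mat" where
  "residue_proj n d c = mat n n (\<lambda>(p, q). if p = q \<and> p mod d = c then 1 else 0)"

lemma residue_proj_carrier [simp]: "residue_proj n d c \<in> carrier_mat n n"
  and residue_proj_dim [simp]: "dim_row (residue_proj n d c) = n" "dim_col (residue_proj n d c) = n"
  by (simp_all add: residue_proj_def)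

lemma mult_residue_proj_index:
  assumes A: "A \<in> carrier_mat n n" and pq: "p < n" "q < n"
  shows "(A * residue_proj n d c) $$ (p, q) = (if q mod d = c then A $$ (p, q) else 0)"
proof -
  have "(A * residue_proj n d c) $$ (p, q) = (\<Sum>k<n. A $$ (p, k) * residue_proj n d c $$ (k, q))"
    by (rule index_mult_mat_sum[OF A residue_proj_carrier pq])
  also have "\<dots> = (\<Sum>k<n. if k = q then (if q mod d = c then A $$ (p, q) else 0) else 0)"
    using pq by (intro sum.cong) (auto simp: residue_proj_def)
  finally show ?thesis using pq by simp
qed

lemma residue_proj_mult_index:
  assumes A: "A \<in> carrier_mat n n" and pq: "p < n" "q < n"
  shows "(residue_proj n d c * A) $$ (p, q) = (if p mod d = c then A $$ (p, q) else 0)"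
proof -
  have "(residue_proj n d c * A) $$ (p, q) = (\<Sum>k<n. residue_proj n d c $$ (p, k) * A $$ (k, q))"
    by (rule index_mult_mat_sum[OF residue_proj_carrier A pq])
  also have "\<dots> = (\<Sum>k<n. if k = p then (if p mod d = c then A $$ (p, q) else 0) else 0)"
    using pq by (intro sum.cong) (auto simp: residue_proj_def)
  finally show ?thesis using pq by simp
qed

lemma mod_pattern_iff_commute:
  assumes A: "A \<in> carrier_mat n n"
  shows "mod_pattern d A \<longleftrightarrow> (\<forall>c. A * residue_proj n d c = residue_proj n d c * A)"
proof
  assume "mod_pattern d A"
  then show "\<forall>c. A * residue_proj n d c = residue_proj n d c * A"
  proof (intro allI eq_matI)
    fix c p q assume "p < dim_row (residue_proj n d c * A)" "q < dim_col (residue_proj n d c * A)"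
    then have pq: "p < n" "q < n" using A by auto
    show "(A * residue_proj n d c) $$ (p, q) = (residue_proj n d c * A) $$ (p, q)"
      using mult_residue_proj_index[OF A pq] residue_proj_mult_index[OF A pq]
        mod_patternD[OF \<open>mod_pattern d A\<close> A pq] by (cases "p mod d = q mod d") auto
  qed (use A in auto)
next
  assume comm: "\<forall>c. A * residue_proj n d c = residue_proj n d c * A"
  show "mod_pattern d A"
    unfolding mod_pattern_def
  proof (intro allI impI)
    fix p q assume "p < dim_row A" "q < dim_col A" "A $$ (p, q) \<noteq> 0"
    moreover from this have "(A * residue_proj n d (q mod d)) $$ (p, q) =
        (residue_proj n d (q mod d) * A) $$ (p, q)"
      using comm by simp
    ultimately show "p mod d = q mod d"
      using A by (auto simp: mult_residue_proj_index residue_proj_mult_index split: if_splits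
          simp del: index_mult_mat(1))
  qed
qed

lemma mod_pattern_mult:
  assumes A: "A \<in> carrier_mat n n" and B: "B \<in> carrier_mat n n"
    and "mod_pattern d A" "mod_pattern d B"
  shows "mod_pattern d (A * B)"
  unfolding mod_pattern_def
proof (intro allI impI)
  fix p q assume "p < dim_row (A * B)" "q < dim_col (A * B)" and nz: "(A * B) $$ (p, q) \<noteq> 0"
  then have pq: "p < n" "q < n" using A B by auto
  from nz obtain k where k: "k \<in> {..<n}" "A $$ (p, k) * B $$ (k, q) \<noteq> 0"
    unfolding index_mult_mat_sum[OF A B pq] by (rule sum.not_neutral_contains_not_neutral)
  then have "A $$ (p, k) \<noteq> 0" "B $$ (k, q) \<noteq> 0" "k < n" by auto
  then have "p mod d = k mod d" "k mod d = q mod d"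
    using mod_patternD[OF \<open>mod_pattern d A\<close> A] mod_patternD[OF \<open>mod_pattern d B\<close> B] pq by blast+
  then show "p mod d = q mod d" by simp
qed

lemma mod_pattern_inverse:
  fixes A B :: "'a::semiring_1 mat"
  assumes A: "A \<in> carrier_mat n n" and B: "B \<in> carrier_mat n n"
    and AB: "A * B = 1\<^sub>m n" and BA: "B * A = 1\<^sub>m n" and "mod_pattern d A"
  shows "mod_pattern d B"
proof -
  have "B * residue_proj n d c = residue_proj n d c * B" for c
  proof -
    let ?P = "residue_proj n d c :: 'a mat"
    have P: "?P \<in> carrier_mat n n" by simp
    have PA: "?P * A = A * ?P" using assms mod_pattern_iff_commute[OF A] by simp
    have "B * ?P = B * ?P * (A * B)"
      using AB right_mult_one_mat[OF mult_carrier_mat[OF B P]] by simp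
    also have "\<dots> = B * (?P * A * B)"
      by (simp only: assoc_mult_mat[OF B P mult_carrier_mat[OF A B]] assoc_mult_mat[OF P A B])
    also have "\<dots> = B * (A * (?P * B))"
      by (simp only: PA assoc_mult_mat[OF A P B])
    also have "\<dots> = (B * A) * (?P * B)"
      by (simp only: assoc_mult_mat[OF B A mult_carrier_mat[OF P B]])
    also have "\<dots> = ?P * B"
      using BA left_mult_one_mat[OF mult_carrier_mat[OF P B]] by simp
    finally show ?thesis .
  qed
  then show ?thesis using mod_pattern_iff_commute[OF B] by simp
qed

definition lower_triangular :: "'a::zero mat \<Rightarrow> bool" where
  "lower_triangular A \<longleftrightarrow> (\<forall>i<dim_row A. \<forall>j<dim_col A. i < j \<longrightarrow> A $$ (i, j) = 0)"

lemma lower_triangular_mult: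
  assumes A: "A \<in> carrier_mat n n" and B: "B \<in> carrier_mat n n"
    and "lower_triangular A" "lower_triangular B"
  shows "lower_triangular (A * B)"
  unfolding lower_triangular_def
proof (intro allI impI)
  fix i j assume "i < dim_row (A * B)" "j < dim_col (A * B)" "i < j"
  then have ij: "i < n" "j < n" "i < j" using A B by auto
  have "(A * B) $$ (i, j) = (\<Sum>k<n. A $$ (i, k) * B $$ (k, j))"
    by (rule index_mult_mat_sum[OF A B ij(1,2)])
  also have "\<dots> = 0"
  proof (rule sum.neutral, intro ballI)
    fix k assume "k \<in> {..<n}"
    then show "A $$ (i, k) * B $$ (k, j) = 0"
      using assms ij by (cases "i < k") (auto simp: lower_triangular_def)
  qed
  finally show "(A * B) $$ (i, j) = 0" .
qed

lemma lower_triangular_diag_nonzero: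
  fixes A :: "'a::idom mat"
  assumes A: "A \<in> carrier_mat n n" and "lower_triangular A" and "det A \<noteq> 0" and "i < n"
  shows "A $$ (i, i) \<noteq> 0"
proof -
  have "det A = (\<Prod>k<n. A $$ (k, k))"
    using assms by (subst det_lower_triangular[of n])
      (auto simp: lower_triangular_def prod_list_diag_prod lessThan_atLeast0)
  then show ?thesis using assms prod_zero_iff[of "{..<n}" "\<lambda>k. A $$ (k, k)"] by auto
qed

lemma lower_triangular_inverse:
  fixes A B :: "'a::field mat"
  assumes A: "A \<in> carrier_mat n n" and B: "B \<in> carrier_mat n n" and AB: "A * B = 1\<^sub>m n"
    and low: "lower_triangular A"
  shows "lower_triangular B"
proof -
  have "det A * det B = 1" using det_mult[OF A B] AB by simp
  then have "det A \<noteq> 0" by (metis mult_zero_left zero_neq_one)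
  then have diag: "A $$ (i, i) \<noteq> 0" if "i < n" for i
    using lower_triangular_diag_nonzero[OF A low _ that] by auto
  have "B $$ (i, j) = 0" if "i < j" "j < n" for i j
    using that
  proof (induction i rule: less_induct)
    case (less i)
    have i: "i < n" using less.prems by simp
    have "0 = (A * B) $$ (i, j)" using AB less.prems by simp
    also have "\<dots> = (\<Sum>k<n. if k = i then A $$ (i, i) * B $$ (i, j) else 0)"
      unfolding index_mult_mat_sum[OF A B i less.prems(2)]
    proof (rule sum.cong)
      fix k assume "k \<in> {..<n}"
      then show "A $$ (i, k) * B $$ (k, j) = (if k = i then A $$ (i, i) * B $$ (i, j) else 0)"
        using less low A by (cases "k < i") (auto simp: lower_triangular_def)
    qed simp
    also have "\<dots> = A $$ (i, i) * B $$ (i, j)" using i by simp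
    finally show ?case using diag[OF i] by simp
  qed
  then show ?thesis using B by (auto simp: lower_triangular_def)
qed

subsection \<open>L and B_L^- as images of coefficient matrices\<close>

definition Lcoeffs :: "nat \<Rightarrow> nat \<Rightarrow> 'k::field mat set" where
  "Lcoeffs n d = {A \<in> carrier_mat n n. mod_pattern d A \<and> det A \<noteq> 0}"

lemma Lcoeffs_carrier: "Lcoeffs n d \<subseteq> carrier_mat n n"
  by (auto simp: Lcoeffs_def)

lemma one_mat_Lcoeffs: "1\<^sub>m n \<in> Lcoeffs n d"
  by (simp add: Lcoeffs_def mod_pattern_def)

lemma Lcoeffs_mult: "A \<in> Lcoeffs n d \<Longrightarrow> B \<in> Lcoeffs n d \<Longrightarrow> A * B \<in> Lcoeffs n d"
  by (auto simp: Lcoeffs_def mod_pattern_mult det_mult)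

lemma Lcoeffs_inverse:
  assumes A: "A \<in> Lcoeffs n d" and B: "B \<in> carrier_mat n n"
    and AB: "A * B = 1\<^sub>m n" and BA: "B * A = 1\<^sub>m n"
  shows "B \<in> Lcoeffs n d"
proof -
  have "A \<in> carrier_mat n n" using A by (simp add: Lcoeffs_def)
  then have "det A * det B = 1" using det_mult[of A n B] B AB by simp
  then show ?thesis
    using assms mod_pattern_inverse[OF _ B AB BA] by (auto simp: Lcoeffs_def)
qed

lemma Lcoeffs_inverseE:
  assumes "A \<in> Lcoeffs n d"
  obtains B where "B \<in> carrier_mat n n" "A * B = 1\<^sub>m n" "B * A = 1\<^sub>m n"
proof -
  have "A \<in> carrier_mat n n" "det A \<noteq> 0" using assms by (auto simp: Lcoeffs_def)
  from det_non_zero_imp_unit[OF this, of "()"] show ?thesis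
    using that unfolding Units_def by (auto simp: ring_mat_simps)
qed

lemma gen_subgroup_subset_Lmat_image:
  assumes S: "S \<subseteq> Lmat d ` C" and C: "C \<subseteq> carrier_mat n n" and C_one: "1\<^sub>m n \<in> C"
    and C_mult: "\<And>A B. A \<in> C \<Longrightarrow> B \<in> C \<Longrightarrow> A * B \<in> C"
    and C_inverse: "\<And>A B. A \<in> C \<Longrightarrow> B \<in> carrier_mat n n \<Longrightarrow>
      A * B = 1\<^sub>m n \<Longrightarrow> B * A = 1\<^sub>m n \<Longrightarrow> B \<in> C"
  shows "gen_subgroup n S \<subseteq> Lmat d ` C"
proof
  fix g assume "g \<in> gen_subgroup n S"
  then show "g \<in> Lmat d ` C"
  proof (induction rule: gen_subgroup.induct)
    case one
    show ?case using C_one Lmat_one by (metis image_eqI)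
  next
    case (gen g)
    then show ?case using S by blast
  next
    case (mult g h)
    then obtain A B where AB: "A \<in> C" "B \<in> C" and "g = Lmat d A" "h = Lmat d B" by blast
    moreover have "A \<in> carrier_mat n n" "B \<in> carrier_mat n n" using AB C by auto
    ultimately have "g * h = Lmat d (A * B)" by (simp add: Lmat_mult)
    then show ?case using AB C_mult by blast
  next
    case (inv g h)
    then obtain A where A: "A \<in> C" "g = Lmat d A" by blast
    moreover have "A \<in> carrier_mat n n" using A C by auto
    ultimately obtain B where "B \<in> carrier_mat n n" "A * B = 1\<^sub>m n" "B * A = 1\<^sub>m n" "h = Lmat d B"
      using inv Lmat_right_inverse[of A n h d] by metis
    then show ?case using A C_inverse by blast
  qed
qed

lemma torus_subset_Lmat: "torus n \<subseteq> Lmat d ` {A \<in> Lcoeffs n d. lower_triangular A}"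
proof
  fix x :: "'k::field lmat" assume "x \<in> torus n"
  then obtain t where t: "\<forall>p<n. t p \<noteq> 0"
    and x: "x = mat n n (\<lambda>(p, q). if p = q then fls_const (t p) else 0)"
    unfolding torus_def by blast
  define D where "D = mat n n (\<lambda>(p, q). if p = q then t p else 0)"
  have D: "D \<in> carrier_mat n n" by (simp add: D_def)
  have low: "lower_triangular D" by (simp add: D_def lower_triangular_def)
  have "det D = (\<Prod>k<n. t k)"
    using D by (subst det_lower_triangular[of n]) (auto simp: D_def prod_list_diag_prod lessThan_atLeast0)
  then have "D \<in> Lcoeffs n d"
    using D t by (auto simp: Lcoeffs_def mod_pattern_def D_def)
  moreover have "x = Lmat d D"
    by (rule eq_matI) (auto simp: x D_def)
  ultimately show "x \<in> Lmat d ` {A \<in> Lcoeffs n d. lower_triangular A}" using low by blast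
qed

lemma Lmat_addrow_mat:
  assumes ij: "i \<noteq> j"
  shows "Lmat d (addrow_mat n a i j) =
    1\<^sub>m n + mat n n (\<lambda>(p, q). if p = i \<and> q = j then fls_const a * fls_X_intpow (Lexp d i j) else 0)"
proof (rule eq_matI)
  fix p q assume "p < dim_row (1\<^sub>m n + mat n n (\<lambda>(p, q). if p = i \<and> q = j
      then fls_const a * fls_X_intpow (Lexp d i j) else (0 :: 'a fls)))"
    "q < dim_col (1\<^sub>m n + mat n n (\<lambda>(p, q). if p = i \<and> q = j
      then fls_const a * fls_X_intpow (Lexp d i j) else (0 :: 'a fls)))"
  then have pq: "p < n" "q < n" by auto
  show "Lmat d (addrow_mat n a i j) $$ (p, q) = (1\<^sub>m n + mat n n (\<lambda>(p, q). if p = i \<and> q = j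
      then fls_const a * fls_X_intpow (Lexp d i j) else 0)) $$ (p, q)"
  proof (cases "p = i \<and> q = j")
    case True
    then show ?thesis using ij pq by simp
  next
    case False
    then show ?thesis using pq by (cases "p = q") auto
  qed
qed simp_all

lemma root_subgroup_eq_Lmat:
  assumes ij: "i \<noteq> j" "i mod d = j mod d"
  shows "root_subgroup n i j ((int i - int j) div int d) =
    Lmat d ` range (\<lambda>a :: 'k::field. addrow_mat n a i j)"
proof -
  have "root_subgroup n i j ((int i - int j) div int d) =
      range (\<lambda>a :: 'k. 1\<^sub>m n + mat n n (\<lambda>(p, q). if p = i \<and> q = j
        then fls_const a * fls_X_intpow (Lexp d i j) else 0))"
    unfolding root_subgroup_def div_eq_Lexp[OF ij(2)] by auto
  also have "\<dots> = range (\<lambda>a. Lmat d (addrow_mat n a i j))"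
    by (simp only: Lmat_addrow_mat[OF ij(1)])
  finally show ?thesis by (simp add: image_image)
qed

lemma addrow_mat_Lcoeffs:
  assumes "i \<noteq> j" "i mod d = j mod d"
  shows "addrow_mat n a i j \<in> Lcoeffs n d"
  using assms det_addrow_mat[of i j n a] by (auto simp: Lcoeffs_def mod_pattern_def)

lemma addrow_mat_lower_triangular: "j < i \<Longrightarrow> lower_triangular (addrow_mat n a i j)"
  by (simp add: lower_triangular_def)

lemma Lgrp_subset_Lmat: "Lgrp n d \<subseteq> Lmat d ` Lcoeffs n d"
  unfolding Lgrp_def
proof (rule gen_subgroup_subset_Lmat_image)
  have "root_subgroup n i j ((int i - int j) div int d) \<subseteq> Lmat d ` Lcoeffs n d"
    if "i \<noteq> j" "i mod d = j mod d" for i j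
    unfolding root_subgroup_eq_Lmat[OF that] using addrow_mat_Lcoeffs[OF that] by blast
  then show "torus n \<union> \<Union>{root_subgroup n i j ((int i - int j) div int d) | i j.
      i < n \<and> j < n \<and> i \<noteq> j \<and> i mod d = j mod d} \<subseteq> Lmat d ` Lcoeffs n d"
    using torus_subset_Lmat[of n d] by blast
qed (simp_all add: Lcoeffs_carrier one_mat_Lcoeffs Lcoeffs_mult Lcoeffs_inverse)

lemma BLminus_subset_Lmat:
  "BLminus n d \<subseteq> Lmat d ` {A :: 'k::field mat. A \<in> Lcoeffs n d \<and> lower_triangular A}"
  unfolding BLminus_def
proof (rule gen_subgroup_subset_Lmat_image)
  have "root_subgroup n i j ((int i - int j) div int d) \<subseteq>
      Lmat d ` {A :: 'k mat. A \<in> Lcoeffs n d \<and> lower_triangular A}"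
    if "j < i" "i mod d = j mod d" for i j
  proof -
    have ij: "i \<noteq> j" using that by simp
    show ?thesis
      unfolding root_subgroup_eq_Lmat[OF ij that(2)]
      using addrow_mat_Lcoeffs[OF ij that(2)] addrow_mat_lower_triangular[OF that(1)] by blast
  qed
  then show "torus n \<union> \<Union>{root_subgroup n i j ((int i - int j) div int d) | i j.
      i < n \<and> j < n \<and> i > j \<and> i mod d = j mod d} \<subseteq>
      Lmat d ` {A :: 'k mat. A \<in> Lcoeffs n d \<and> lower_triangular A}"
    using torus_subset_Lmat[of n d] by blast
next
  fix A B :: "'k mat"
  assume "A \<in> {A. A \<in> Lcoeffs n d \<and> lower_triangular A}"
    "B \<in> {A. A \<in> Lcoeffs n d \<and> lower_triangular A}"
  then show "A * B \<in> {A. A \<in> Lcoeffs n d \<and> lower_triangular A}"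
    using Lcoeffs_carrier lower_triangular_mult[of A n B] by (auto simp: Lcoeffs_mult)
next
  fix A B :: "'k mat"
  assume "A \<in> {A. A \<in> Lcoeffs n d \<and> lower_triangular A}" "B \<in> carrier_mat n n"
    "A * B = 1\<^sub>m n" "B * A = 1\<^sub>m n"
  then show "B \<in> {A. A \<in> Lcoeffs n d \<and> lower_triangular A}"
    using Lcoeffs_carrier Lcoeffs_inverse[of A n d B] lower_triangular_inverse[of A n B] by auto
qed (use Lcoeffs_carrier one_mat_Lcoeffs in \<open>auto simp: lower_triangular_def\<close>)

lemma gen_subgroup_mono:
  assumes "S \<subseteq> T"
  shows "gen_subgroup n S \<subseteq> gen_subgroup n T"
proof
  fix x assume "x \<in> gen_subgroup n S"
  then show "x \<in> gen_subgroup n T"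
    by induction (use assms in \<open>auto intro: gen_subgroup.intros\<close>)
qed

lemma BLminus_subset_Lgrp: "BLminus n d \<subseteq> Lgrp n d"
  unfolding BLminus_def Lgrp_def by (rule gen_subgroup_mono) auto

lemma BLminus_mult: "g \<in> BLminus n d \<Longrightarrow> h \<in> BLminus n d \<Longrightarrow> g * h \<in> BLminus n d"
  unfolding BLminus_def by (rule gen_subgroup.mult)

lemma torus_subset_BLminus: "torus n \<subseteq> BLminus n d"
  unfolding BLminus_def by (auto intro: gen_subgroup.gen)

lemma Lmat_addrow_mat_in_BLminus:
  assumes "q < p" "p < n" "p mod d = q mod d"
  shows "Lmat d (addrow_mat n c p q) \<in> BLminus n d"
proof -
  have "Lmat d (addrow_mat n c p q) \<in> root_subgroup n p q ((int p - int q) div int d)"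
    using assms by (simp add: root_subgroup_eq_Lmat)
  moreover have "root_subgroup n p q ((int p - int q) div int d) \<in> {root_subgroup n i j ((int i - int j) div int d)
      | i j. i < n \<and> j < n \<and> i > j \<and> i mod d = j mod d}"
    using assms less_trans[OF assms(1,2)] by blast
  ultimately show ?thesis
    unfolding BLminus_def by (blast intro: gen_subgroup.gen)
qed

lemma addrow_mat_clear_entry:
  fixes A :: "'a::field mat"
  assumes A: "A \<in> carrier_mat n n" and low: "lower_triangular A"
    and pq: "p0 < n" "q0 < p0" and piv: "A $$ (q0, q0) \<noteq> 0"
    and row_q0: "\<And>q. q < q0 \<Longrightarrow> A $$ (q0, q) = 0"
  shows "addrow_mat n (- (A $$ (p0, q0) / A $$ (q0, q0))) p0 q0 * A =
    mat n n (\<lambda>(p, q). if (p, q) = (p0, q0) then 0 else A $$ (p, q))"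
    (is "addrow_mat n ?c p0 q0 * A = ?A'")
proof -
  have "A $$ (q0, q) = 0" if "q < n" "q \<noteq> q0" for q
    using row_q0 low A pq that by (cases "q < q0") (auto simp: lower_triangular_def)
  then have "addrow ?c p0 q0 A = ?A'"
    using A pq piv by (intro eq_matI) auto
  then show ?thesis using addrow_mat[OF A, of q0 ?c p0] pq by simp
qed

lemma Lmat_diagonal_in_torus:
  assumes A: "A \<in> carrier_mat n n" and diag: "\<And>p. p < n \<Longrightarrow> A $$ (p, p) \<noteq> 0"
    and off_diag: "\<And>p q. p < n \<Longrightarrow> q < n \<Longrightarrow> p \<noteq> q \<Longrightarrow> A $$ (p, q) = 0"
  shows "Lmat d A \<in> torus n"
proof -
  have "Lmat d A = mat n n (\<lambda>(p, q). if p = q then fls_const (A $$ (p, p)) else 0)"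
    by (rule eq_matI) (use A off_diag in auto)
  then show ?thesis
    unfolding torus_def using diag by (intro CollectI exI[of _ "\<lambda>p. A $$ (p, p)"]) auto
qed

lemma Lcoeffs_clear_entry:
  assumes A: "A \<in> Lcoeffs n d" "lower_triangular A"
    and pq: "p0 < n" "q0 < p0" and nz: "A $$ (p0, q0) \<noteq> 0"
    and row_q0: "\<And>q. q < q0 \<Longrightarrow> A $$ (q0, q) = 0"
  defines "A' \<equiv> mat n n (\<lambda>(p, q). if (p, q) = (p0, q0) then 0 else A $$ (p, q))"
  shows "A' \<in> Lcoeffs n d" and "lower_triangular A'" and "\<exists>c. A = addrow_mat n c p0 q0 * A'"
proof -
  have Ac: "A \<in> carrier_mat n n" "mod_pattern d A" "det A \<noteq> 0" using A(1) by (auto simp: Lcoeffs_def)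
  have piv: "A $$ (q0, q0) \<noteq> 0" using lower_triangular_diag_nonzero[OF Ac(1) A(2) Ac(3)] pq by simp
  have mod0: "p0 mod d = q0 mod d" using mod_patternD[OF Ac(2,1)] pq nz by simp
  define c where "c = A $$ (p0, q0) / A $$ (q0, q0)"
  have A'_eq: "A' = addrow_mat n (- c) p0 q0 * A"
    unfolding A'_def c_def using addrow_mat_clear_entry[OF Ac(1) A(2) pq piv row_q0] by simp
  show "A' \<in> Lcoeffs n d"
    unfolding A'_eq using addrow_mat_Lcoeffs[of p0 q0 d n "- c"] pq mod0 A(1) by (intro Lcoeffs_mult) auto
  show "lower_triangular A'"
    using A(2) Ac(1) unfolding A'_def lower_triangular_def by auto
  have "A = addrow_mat n c p0 q0 * A'"
    unfolding A'_eq using Ac(1) pq by (simp add: assoc_mult_mat[of _ n n _ n _ n, symmetric] addrow_mat_inv)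
  then show "\<exists>c. A = addrow_mat n c p0 q0 * A'" ..
qed

lemma lower_triangular_Lcoeffs_in_BLminus:
  assumes "A \<in> Lcoeffs n d" and "lower_triangular A"
  shows "Lmat d A \<in> BLminus n d"
  using assms
proof (induction "card {(p, q). p < n \<and> q < p \<and> A $$ (p, q) \<noteq> 0}" arbitrary: A rule: less_induct)
  case less
  define S where "S = {(p, q). p < n \<and> q < p \<and> A $$ (p, q) \<noteq> 0}"
  have A: "A \<in> carrier_mat n n" "det A \<noteq> 0" using less.prems by (auto simp: Lcoeffs_def)
  show ?case
  proof (cases "S = {}")
    case True
    have "A $$ (p, q) = 0" if "p < n" "q < n" "p \<noteq> q" for p q
      using True less.prems(2) A(1) that unfolding S_def lower_triangular_def by (cases "p < q") auto
    then have "Lmat d A \<in> torus n"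
      using lower_triangular_diag_nonzero[OF A(1) less.prems(2) A(2)] by (intro Lmat_diagonal_in_torus A(1))
    then show ?thesis using torus_subset_BLminus by blast
  next
    case False
    \<comment> \<open>clear an entry in the leftmost column of S: row q0 then has nothing left of the diagonal\<close>
    then obtain s where "s \<in> S" by blast
    then obtain p0 q0 where s0: "(p0, q0) \<in> S" and least: "\<And>p q. (p, q) \<in> S \<Longrightarrow> q0 \<le> q"
      using ex_has_least_nat[of "\<lambda>s. s \<in> S" s snd] by auto
    have pq0: "p0 < n" "q0 < p0" "A $$ (p0, q0) \<noteq> 0" using s0 by (auto simp: S_def)
    have row_q0: "A $$ (q0, q) = 0" if "q < q0" for q
      using least[of q0 q] that pq0 by (force simp: S_def)
    define A' where "A' = mat n n (\<lambda>(p, q). if (p, q) = (p0, q0) then 0 else A $$ (p, q))"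
    obtain c where A'_Lcoeffs: "A' \<in> Lcoeffs n d" and A'_low: "lower_triangular A'"
      and A_eq: "A = addrow_mat n c p0 q0 * A'"
      using Lcoeffs_clear_entry[OF less.prems pq0 row_q0] unfolding A'_def by blast
    have "{(p, q). p < n \<and> q < p \<and> A' $$ (p, q) \<noteq> 0} = S - {(p0, q0)}"
      unfolding A'_def S_def by (auto split: if_splits)
    moreover have "finite S" unfolding S_def
      by (rule finite_subset[of _ "{..<n} \<times> {..<n}"]) auto
    ultimately have "card {(p, q). p < n \<and> q < p \<and> A' $$ (p, q) \<noteq> 0} < card S"
      using s0 by (metis card_Diff1_less)
    then have A'_BL: "Lmat d A' \<in> BLminus n d"
      using less.hyps A'_Lcoeffs A'_low unfolding S_def by blast
    have "p0 mod d = q0 mod d" using mod_patternD[of d A n] less.prems(1) pq0 by (auto simp: Lcoeffs_def)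
    then have "Lmat d (addrow_mat n c p0 q0) \<in> BLminus n d"
      using Lmat_addrow_mat_in_BLminus pq0 by blast
    moreover have "A' \<in> carrier_mat n n" using A'_Lcoeffs Lcoeffs_carrier by blast
    then have "Lmat d A = Lmat d (addrow_mat n c p0 q0) * Lmat d A'"
      unfolding A_eq by (rule Lmat_mult[OF addrow_mat_carrier])
    ultimately show ?thesis using BLminus_mult A'_BL by simp
  qed
qed

subsection \<open>Conjugation by an element of the extended affine Weyl group\<close>

text \<open>Positivity of the affine root \<alpha>_ij + r, in the combinatorial form of ``its root subgroup lies in I''.\<close>

definition positive_aff_root :: "nat \<Rightarrow> nat \<Rightarrow> int \<Rightarrow> bool" where
  "positive_aff_root i j r \<longleftrightarrow> 0 < r \<or> (r = 0 \<and> i < j)"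

lemma positive_aff_root_add:
  "positive_aff_root i j r \<Longrightarrow> positive_aff_root j k r' \<Longrightarrow> positive_aff_root i k (r + r')"
  by (auto simp: positive_aff_root_def)

locale monomial_conj =
  fixes n :: nat and sig :: "nat \<Rightarrow> nat" and lam :: "nat \<Rightarrow> int" and w winv :: "'k::field lmat"
  assumes sig_permutes: "sig permutes {..<n}"
    and w_eq: "w = perm_matrix n sig * diag_spow n lam"
    and winv_carrier: "winv \<in> carrier_mat n n"
    and w_winv: "w * winv = 1\<^sub>m n" and winv_w: "winv * w = 1\<^sub>m n"
begin

lemma sig_less: "q < n \<Longrightarrow> sig q < n"
  using permutes_in_image[OF sig_permutes] by simp

lemma sig_eq_iff: "sig a = sig b \<longleftrightarrow> a = b"
  using permutes_inj[OF sig_permutes] by (simp add: inj_eq)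

lemma sig_surj:
  assumes "p < n"
  obtains a where "a < n" "sig a = p"
  using permutes_image[OF sig_permutes] assms by (metis imageE lessThan_iff)

lemma w_carrier: "w \<in> carrier_mat n n"
  unfolding w_eq by (rule mult_carrier_mat) (auto simp: perm_matrix_def diag_spow_def)

lemma w_index:
  assumes pq: "p < n" "q < n"
  shows "w $$ (p, q) = (if p = sig q then fls_X_intpow (lam q) else 0)"
proof -
  have P: "(perm_matrix n sig :: 'k lmat) \<in> carrier_mat n n"
    and D: "(diag_spow n lam :: 'k lmat) \<in> carrier_mat n n"
    by (auto simp: perm_matrix_def diag_spow_def)
  have "w $$ (p, q) = (\<Sum>m<n. if m = q then (if p = sig q then fls_X_intpow (lam q) else 0) else 0)"
    unfolding w_eq index_mult_mat_sum[OF P D pq]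
    using pq by (intro sum.cong) (auto simp: perm_matrix_def diag_spow_def)
  then show ?thesis using pq by simp
qed

lemma w_mult_index:
  assumes M: "M \<in> carrier_mat n n" and am: "a < n" "m < n"
  shows "(w * M) $$ (sig a, m) = fls_X_intpow (lam a) * M $$ (a, m)"
proof -
  have "(w * M) $$ (sig a, m) = (\<Sum>k<n. if k = a then fls_X_intpow (lam a) * M $$ (a, m) else 0)"
    unfolding index_mult_mat_sum[OF w_carrier M sig_less[OF am(1)] am(2)]
    by (intro sum.cong) (auto simp: w_index sig_less am sig_eq_iff)
  then show ?thesis using am by simp
qed

lemma mult_w_index:
  assumes M: "M \<in> carrier_mat n n" and mb: "m < n" "b < n"
  shows "(M * w) $$ (m, b) = M $$ (m, sig b) * fls_X_intpow (lam b)"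
proof -
  have "(M * w) $$ (m, b) = (\<Sum>k<n. if k = sig b then M $$ (m, sig b) * fls_X_intpow (lam b) else 0)"
    unfolding index_mult_mat_sum[OF M w_carrier mb]
    by (intro sum.cong) (auto simp: w_index mb)
  then show ?thesis using sig_less[OF mb(2)] by simp
qed

lemma conj_index:
  assumes M: "M \<in> carrier_mat n n" and ab: "a < n" "b < n"
  shows "(w * M * winv) $$ (sig a, sig b) = fls_X_intpow (lam a - lam b) * M $$ (a, b)"
proof -
  let ?N = "w * M * winv"
  have N: "?N \<in> carrier_mat n n" using w_carrier M winv_carrier by simp
  \<comment> \<open>instead of computing winv, compare the entries of N w = w M\<close>
  have "?N * w = w * M * (winv * w)"
    using w_carrier M winv_carrier by (simp add: assoc_mult_mat[of _ n n _ n _ n])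
  then have "?N * w = w * M" using w_carrier M winv_w by simp
  then have eq: "?N $$ (sig a, sig b) * fls_X_intpow (lam b) = fls_X_intpow (lam a) * M $$ (a, b)"
    using mult_w_index[OF N sig_less[OF ab(1)] ab(2)] w_mult_index[OF M ab] by simp
  have "?N $$ (sig a, sig b) = ?N $$ (sig a, sig b) * fls_X_intpow (lam b) * fls_X_intpow (- lam b)"
    by (simp only: mult.assoc fls_X_intpow_times_fls_X_intpow add.right_inverse minus_zero fls_shift_0
        mult_1_right)
  also have "\<dots> = fls_X_intpow (lam a) * fls_X_intpow (- lam b) * M $$ (a, b)"
    unfolding eq by (simp only: ac_simps)
  also have "\<dots> = fls_X_intpow (lam a - lam b) * M $$ (a, b)"
    by (simp only: fls_X_intpow_diff_conv_times)
  finally show ?thesis .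
qed

text \<open>Conjugation by w maps \<alpha>_ab + Lexp d a b to \<alpha>_(sig a)(sig b) + conj_level d a b.\<close>

definition conj_level :: "nat \<Rightarrow> nat \<Rightarrow> nat \<Rightarrow> int" where
  "conj_level d a b = lam a - lam b + Lexp d a b"

lemma conj_level_add: "conj_level d p m + conj_level d m q = conj_level d p q"
  using Lexp_add[of d p m q] by (simp add: conj_level_def)

lemma conj_level_swap: "conj_level d q p = - conj_level d p q"
  using Lexp_add[of d p q p] by (simp add: conj_level_def)

lemma conj_Lmat_index:
  assumes A: "A \<in> carrier_mat n n" and ab: "a < n" "b < n"
  shows "(w * Lmat d A * winv) $$ (sig a, sig b) = fls_const (A $$ (a, b)) * fls_X_intpow (conj_level d a b)"
proof -
  have "(w * Lmat d A * winv) $$ (sig a, sig b) =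
      fls_const (A $$ (a, b)) * (fls_X_intpow (lam a - lam b) * fls_X_intpow (Lexp d a b))"
    using conj_index[OF Lmat_carrier[OF A] ab] A ab by (simp add: ac_simps)
  then show ?thesis by (simp only: fls_X_intpow_times_fls_X_intpow conj_level_def)
qed

lemma conj_mult:
  assumes x: "x \<in> carrier_mat n n" and y: "y \<in> carrier_mat n n"
  shows "w * (x * y) * winv = (w * x * winv) * (w * y * winv)"
proof -
  have "(w * x * winv) * (w * y * winv) = w * x * (winv * w) * y * winv"
    using w_carrier winv_carrier x y by (simp add: assoc_mult_mat[of _ n n _ n _ n])
  then show ?thesis
    using w_carrier winv_carrier x y winv_w by (simp add: assoc_mult_mat[of _ n n _ n _ n])
qed

lemma conj_cancel:
  assumes x: "x \<in> carrier_mat n n"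
  shows "winv * (w * x * winv) * w = x"
proof -
  have "winv * (w * x * winv) * w = (winv * w) * x * (winv * w)"
    using w_carrier winv_carrier x by (simp add: assoc_mult_mat[of _ n n _ n _ n])
  then show ?thesis using winv_w x by simp
qed

lemma cancel_conj:
  assumes g: "g \<in> carrier_mat n n"
  shows "w * (winv * g * w) * winv = g"
proof -
  have "w * (winv * g * w) * winv = (w * winv) * g * (w * winv)"
    using w_carrier winv_carrier g by (simp add: assoc_mult_mat[of _ n n _ n _ n])
  then show ?thesis using w_winv g by simp
qed

lemma simple_root_positive:
  assumes d: "1 \<le> d" and i: "i + d < n" and pos: "pos_after n w winv (i, i + d, -1)"
  shows "positive_aff_root (sig i) (sig (i + d)) (conj_level d i (i + d))"
proof -
  let ?u = "Lmat d (addrow_mat n 1 i (i + d)) :: 'k lmat"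
  let ?e = "(w * ?u * winv) $$ (sig i, sig (i + d))"
  have ne: "i \<noteq> i + d" using d by simp
  have "(int i - int (i + d)) div int d = -1" using d by (simp add: zdiv_zminus1_eq_if)
  then have "?u \<in> root_subgroup n i (i + d) (-1)"
    using root_subgroup_eq_Lmat[OF ne, of d n] by auto
  then have "w * ?u * winv \<in> Iwahori n" using pos by (auto simp: pos_after_def)
  moreover have "sig i < n" "sig (i + d) < n" using i sig_less by auto
  ultimately have ps: "in_power_series ?e" and low: "sig (i + d) < sig i \<Longrightarrow> fls_nth ?e 0 = 0"
    unfolding Iwahori_def invertible_in_def by blast+
  have e: "?e = fls_X_intpow (conj_level d i (i + d))"
    using conj_Lmat_index[of "addrow_mat n 1 i (i + d)" i "i + d" d] i ne by simp
  then have nth: "fls_nth ?e t = (if t = conj_level d i (i + d) then 1 else 0)" for t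
    by simp
  have "0 \<le> conj_level d i (i + d)"
  proof (rule ccontr)
    assume "\<not> 0 \<le> conj_level d i (i + d)"
    then have "fls_nth ?e (conj_level d i (i + d)) = 0" using ps by (simp add: in_power_series_def)
    then show False using nth by simp
  qed
  moreover have "sig i < sig (i + d)" if "conj_level d i (i + d) = 0"
    using low that nth[of 0] ne sig_eq_iff[of i "i + d"] by (auto simp: nat_neq_iff)
  ultimately show ?thesis by (auto simp: positive_aff_root_def)
qed

lemma congruent_root_positive:
  assumes d: "1 \<le> d" and simple: "\<forall>\<alpha>\<in>DeltaL n d. pos_after n w winv \<alpha>"
    and pq: "p < q" "q < n" "p mod d = q mod d"
  shows "positive_aff_root (sig p) (sig q) (conj_level d p q)"
proof -
  have step: "positive_aff_root (sig i) (sig (i + d)) (conj_level d i (i + d))" if "i + d < n" for i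
    using simple_root_positive[OF d that] simple that by (auto simp: DeltaL_def)
  obtain k where q: "q = p + Suc k * d"
  proof -
    obtain m where "q - p = d * m" using pq mod_eq_dvd_iff_nat[of p q d] by auto
    moreover have "m \<noteq> 0" using calculation pq by (metis mult_0_right zero_less_diff less_irrefl)
    ultimately show ?thesis using that[of "m - 1"] pq by (cases m) (auto simp: algebra_simps)
  qed
  have "positive_aff_root (sig p) (sig (p + Suc k * d)) (conj_level d p (p + Suc k * d))"
    if "p + Suc k * d < n" for k
    using that
  proof (induction k)
    case 0
    then show ?case using step[of p] by simp
  next
    case (Suc k)
    then have "positive_aff_root (sig p) (sig (p + Suc k * d)) (conj_level d p (p + Suc k * d))"
      by simp
    moreover have "positive_aff_root (sig (p + Suc k * d)) (sig (p + Suc (Suc k) * d))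
        (conj_level d (p + Suc k * d) (p + Suc (Suc k) * d))"
      using step[of "p + Suc k * d"] Suc.prems by (simp add: algebra_simps)
    ultimately show ?case
      using positive_aff_root_add conj_level_add by metis
  qed
  then show ?thesis using pq q by simp
qed

lemma conj_Lmat_in_Iminus_imp_lower:
  assumes d: "1 \<le> d" and simple: "\<forall>\<alpha>\<in>DeltaL n d. pos_after n w winv \<alpha>"
    and A: "A \<in> carrier_mat n n" "mod_pattern d A" and I: "w * Lmat d A * winv \<in> Iminus n"
  shows "lower_triangular A"
  unfolding lower_triangular_def
proof (intro allI impI)
  fix p q assume "p < dim_row A" "q < dim_col A" "p < q"
  then have pq: "p < n" "q < n" "p < q" using A by auto
  show "A $$ (p, q) = 0"
  proof (rule ccontr)
    assume nz: "A $$ (p, q) \<noteq> 0"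
    then have "p mod d = q mod d" using mod_patternD[OF A(2,1) pq(1,2)] by blast
    then have pos: "positive_aff_root (sig p) (sig q) (conj_level d p q)"
      using congruent_root_positive[OF d simple pq(3,2)] by simp
    let ?e = "(w * Lmat d A * winv) $$ (sig p, sig q)"
    have "in_poly_sinv ?e" "sig p < sig q \<Longrightarrow> fls_nth ?e 0 = 0"
      using I sig_less pq unfolding Iminus_def invertible_in_def by blast+
    then show False
      using pos nz conj_Lmat_index[OF A(1) pq(1,2)]
      by (auto simp: in_poly_sinv_const_X_intpow fls_nth_const_X_intpow positive_aff_root_def)
  qed
qed

lemma conj_lower_Lmat_entries:
  assumes d: "1 \<le> d" and simple: "\<forall>\<alpha>\<in>DeltaL n d. pos_after n w winv \<alpha>"
    and A: "A \<in> carrier_mat n n" "mod_pattern d A" "lower_triangular A"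
    and pq: "p < n" "q < n"
  shows "in_poly_sinv ((w * Lmat d A * winv) $$ (p, q))"
    and "p < q \<Longrightarrow> fls_nth ((w * Lmat d A * winv) $$ (p, q)) 0 = 0"
proof -
  obtain a b where ab: "a < n" "b < n" and p: "p = sig a" and q: "q = sig b"
    using sig_surj[OF pq(1)] sig_surj[OF pq(2)] by metis
  have key: "conj_level d a b < 0 \<or> (conj_level d a b = 0 \<and> \<not> sig a < sig b)"
    if nz: "A $$ (a, b) \<noteq> 0"
  proof (cases "a = b")
    case True
    then show ?thesis by (simp add: conj_level_def)
  next
    case False
    with nz A(1,3) ab have "b < a" unfolding lower_triangular_def by (metis carrier_matD nat_neq_iff)
    moreover have "b mod d = a mod d" using mod_patternD[OF A(2,1) ab nz] by simp
    ultimately have "positive_aff_root (sig b) (sig a) (conj_level d b a)"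
      using congruent_root_positive[OF d simple] ab by simp
    then show ?thesis by (auto simp: positive_aff_root_def conj_level_swap[of d b a])
  qed
  show "in_poly_sinv ((w * Lmat d A * winv) $$ (p, q))"
    unfolding p q conj_Lmat_index[OF A(1) ab] in_poly_sinv_const_X_intpow
    using key by (cases "A $$ (a, b) = 0") auto
  show "fls_nth ((w * Lmat d A * winv) $$ (p, q)) 0 = 0" if "p < q"
    unfolding p q conj_Lmat_index[OF A(1) ab] fls_nth_const_X_intpow
    using that key p q by (cases "A $$ (a, b) = 0") auto
qed

lemma conj_lower_Lcoeffs_in_Iminus:
  assumes d: "1 \<le> d" and simple: "\<forall>\<alpha>\<in>DeltaL n d. pos_after n w winv \<alpha>"
    and A: "A \<in> Lcoeffs n d" "lower_triangular A"
  shows "w * Lmat d A * winv \<in> Iminus n"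
proof -
  obtain B where B: "B \<in> carrier_mat n n" "A * B = 1\<^sub>m n" "B * A = 1\<^sub>m n"
    using Lcoeffs_inverseE[OF A(1)] .
  have Ac: "A \<in> carrier_mat n n" using A(1) Lcoeffs_carrier by blast
  have B_lower: "B \<in> Lcoeffs n d" "lower_triangular B"
    using Lcoeffs_inverse[OF A(1) B] lower_triangular_inverse[OF Ac B(1,2) A(2)] .
  let ?g = "w * Lmat d A * winv" and ?h = "w * Lmat d B * winv"
  have "?g * ?h = w * (Lmat d A * Lmat d B) * winv"
    using conj_mult[OF Lmat_carrier[OF Ac] Lmat_carrier[OF B(1)]] by simp
  also have "\<dots> = w * Lmat d (A * B) * winv" by (simp only: Lmat_mult[OF Ac B(1)])
  also have "\<dots> = 1\<^sub>m n" using B(2) w_carrier w_winv by simp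
  finally have gh: "?g * ?h = 1\<^sub>m n" .
  have "?h * ?g = w * (Lmat d B * Lmat d A) * winv"
    using conj_mult[OF Lmat_carrier[OF B(1)] Lmat_carrier[OF Ac]] by simp
  also have "\<dots> = w * Lmat d (B * A) * winv" by (simp only: Lmat_mult[OF B(1) Ac])
  also have "\<dots> = 1\<^sub>m n" using B(3) w_carrier w_winv by simp
  finally have hg: "?h * ?g = 1\<^sub>m n" .
  have carrier: "?g \<in> carrier_mat n n" "?h \<in> carrier_mat n n"
    using Ac B(1) w_carrier winv_carrier by auto
  have "\<forall>p<n. \<forall>q<n. in_poly_sinv (?g $$ (p, q)) \<and> in_poly_sinv (?h $$ (p, q))"
    "\<forall>p<n. \<forall>q<n. p < q \<longrightarrow> fls_nth (?g $$ (p, q)) 0 = 0"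
    using conj_lower_Lmat_entries[OF d simple] Ac A B_lower Lcoeffs_carrier B(1)
    by (auto simp: Lcoeffs_def)
  then show ?thesis
    unfolding Iminus_def invertible_in_def using carrier gh hg by blast
qed

end

lemma Iminus_carrier: "g \<in> Iminus n \<Longrightarrow> g \<in> carrier_mat n n"
  by (simp add: Iminus_def invertible_in_def)

theorem lemma10p3:
  fixes n d :: nat and w winv :: "'k::field lmat"
  assumes "1 \<le> d" and "d \<le> n"
    and "w \<in> affW n"
    and "winv \<in> carrier_mat n n" and "w * winv = 1\<^sub>m n" and "winv * w = 1\<^sub>m n"
    and "\<forall>\<alpha> \<in> DeltaL n d. pos_after n w winv \<alpha>"
  shows "Lgrp n d \<inter> {winv * g * w | g. g \<in> Iminus n} = BLminus n d"
proof -
  obtain sig lam where "sig permutes {..<n}" "w = perm_matrix n sig * diag_spow n lam"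
    using assms(3) unfolding affW_def by blast
  then interpret monomial_conj n sig lam w winv
    using assms(4-6) by unfold_locales
  show ?thesis
  proof (intro equalityI subsetI)
    fix x assume "x \<in> Lgrp n d \<inter> {winv * g * w | g. g \<in> Iminus n}"
    then obtain A g where A: "A \<in> Lcoeffs n d" "x = Lmat d A" and g: "g \<in> Iminus n" "x = winv * g * w"
      using Lgrp_subset_Lmat by blast
    then have "w * Lmat d A * winv \<in> Iminus n" using cancel_conj Iminus_carrier by metis
    then have "lower_triangular A"
      using conj_Lmat_in_Iminus_imp_lower[OF assms(1,7)] A(1) by (simp add: Lcoeffs_def)
    then show "x \<in> BLminus n d" using lower_triangular_Lcoeffs_in_BLminus A by simp
  next
    fix x :: "'k lmat" assume x: "x \<in> BLminus n d"
    then obtain A where A: "A \<in> Lcoeffs n d" "lower_triangular A" "x = Lmat d A"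
      using BLminus_subset_Lmat by blast
    then have "A \<in> carrier_mat n n" using Lcoeffs_carrier by blast
    then have "x \<in> carrier_mat n n" using A(3) by simp
    then have "x = winv * (w * x * winv) * w" by (simp add: conj_cancel)
    moreover have "w * x * winv \<in> Iminus n"
      using conj_lower_Lcoeffs_in_Iminus[OF assms(1,7) A(1,2)] A(3) by simp
    ultimately show "x \<in> Lgrp n d \<inter> {winv * g * w | g. g \<in> Iminus n}"
      using BLminus_subset_Lgrp x by blast
  qed
qed

end
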